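(* Let $\mathscr{H}$ be a real Hilbert space and let $\mathcal{V}=\{v_n\}_{n=0}^\infty\subset\mathscr{H}$ be a sequence without positive relations such that $\mathcal{C}[[\mathcal{V}]]$ is closed. Then for every $w\in\mathscr{H}$ there is a unique subset $S\subset\mathbb{N}$ such that \[ P_{\mathcal{C}[[\mathcal{V}]]}(w)=\sum_{n\in S} a_n v_n\quad\text{with } a_n>0 \text{ for all } n\in S, \] where the pair $(S,\{a_n\}_{n\in S})$ is uniquely determined by the conditions: (i) $\sum_{n\in S}a_nv_n$ converges in $\mathscr{H}$ and $a_n>0$ for all $n\in S$; (ii) $\sum_{k\in S}a_k\langle v_k,v_n\rangle\ge\langle w,v_n\rangle$ for all $n\in\mathbb{N}$; (iii) $\sum_{k\in S}a_k\langle v_k,v_n\rangle=\langle w,v_n\rangle$ for all $n\in S$.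
   Context: $\mathbb{N}=\{0,1,2,\dots\}$. $\mathcal{C}[[\mathcal{V}]]=\{\sum_{n=0}^\infty a_n v_n : a_n\ge 0,\ \text{the series converges in }\mathscr{H}\}$ (convergence of partial sums $\sum_{n=0}^N$). For $S\subset\mathbb{N}$, "$\sum_{n\in S}a_nv_n$ converges" means $\lim_{N\to\infty}\sum_{n\in S,\,n\le N}a_nv_n$ exists in $\mathscr{H}$; by convention $\sum_{n\in\emptyset}a_nv_n=0$. A sequence $\{v_n\}$ has no positive relations if whenever $\sum_{n=0}^\infty a_nv_n=\sum_{n=0}^\infty b_nv_n$ for two convergent series with all $a_n,b_n\ge 0$, one has $a_n=b_n$ for all $n$. For a closed convex set $K\subset\mathscr{H}$, $P_K(w)$ denotes the metric projection: the unique point of $K$ closest to $w$. *)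

theory Defs
  imports "HOL-Analysis.Analysis"
begin

definition sconv :: "nat set \<Rightarrow> (nat \<Rightarrow> 'a::{real_normed_vector}) \<Rightarrow> bool" where
  "sconv S f \<longleftrightarrow> convergent (\<lambda>N. \<Sum>n\<in>S \<inter> {..N}. f n)"

definition ssum :: "nat set \<Rightarrow> (nat \<Rightarrow> 'a::{real_normed_vector}) \<Rightarrow> 'a" where
  "ssum S f = lim (\<lambda>N. \<Sum>n\<in>S \<inter> {..N}. f n)"

definition pos_cone :: "(nat \<Rightarrow> 'a::real_normed_vector) \<Rightarrow> 'a set" where
  "pos_cone v = {x. \<exists>a. (\<forall>n. a n \<ge> 0) \<and> (\<lambda>n. a n *\<^sub>R v n) sums x}"

definition no_positive_relations :: "(nat \<Rightarrow> 'a::real_normed_vector) \<Rightarrow> bool" where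
  "no_positive_relations v \<longleftrightarrow>
     (\<forall>a b x. (\<forall>n. a n \<ge> 0) \<and> (\<forall>n. b n \<ge> 0) \<and>
        (\<lambda>n. a n *\<^sub>R v n) sums x \<and> (\<lambda>n. b n *\<^sub>R v n) sums x \<longrightarrow> a = b)"

definition metric_proj :: "'a::metric_space set \<Rightarrow> 'a \<Rightarrow> 'a" where
  "metric_proj K w = (THE x. x \<in> K \<and> (\<forall>y\<in>K. dist w x \<le> dist w y))"

end

theory Submission
  imports Defs
begin

text \<open>The cone \<open>C = pos_cone v\<close> is closed and convex, so the Hilbert projection theorem gives a
nearest point \<open>x\<close> to \<open>w\<close>, characterised by \<open>\<langle>w - x, y - x\<rangle> \<le> 0\<close> for all \<open>y \<in> C\<close>.
Writing \<open>x = \<Sum> c\<^sub>n v\<^sub>n\<close> with \<open>c\<^sub>n \<ge> 0\<close> and testing this against \<open>x + v\<^sub>n\<close> and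
\<open>x - c\<^sub>n v\<^sub>n\<close> shows that it is equivalent to \<open>\<langle>x, v\<^sub>n\<rangle> \<ge> \<langle>w, v\<^sub>n\<rangle>\<close> for all \<open>n\<close>,
with equality when \<open>c\<^sub>n > 0\<close>: these are conditions (ii) and (iii) for the support
\<open>S = {n. c\<^sub>n > 0}\<close>. Absence of positive relations makes the coefficients of a point of
\<open>C\<close> unique, which gives both uniqueness statements.\<close>

lemma parallelogram_midpoint:
  fixes a b w :: "'a::real_inner"
  shows "norm (a - b)^2 = 2 * norm (w - a)^2 + 2 * norm (w - b)^2 - 4 * norm (w - midpoint a b)^2"
  unfolding power2_norm_eq_inner midpoint_def
  by (simp add: inner_diff_left inner_diff_right inner_add_left inner_add_right inner_commute algebra_simps)

lemma minimizing_sequence_Cauchy: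
  fixes K :: "'a::real_inner set"
  assumes "convex K" and yK: "\<And>n. y n \<in> K" and lim: "(\<lambda>n. dist w (y n)) \<longlonglongrightarrow> infdist w K"
  shows "Cauchy y"
proof (rule metric_CauchyI)
  fix e :: real
  assume "e > 0"
  define d where "d = infdist w K"
  have "(\<lambda>n. dist w (y n)^2 - d^2) \<longlonglongrightarrow> d^2 - d^2"
    using lim unfolding d_def by (intro tendsto_intros)
  then have "\<forall>\<^sub>F n in sequentially. dist w (y n)^2 - d^2 < e^2 / 4"
    using \<open>e > 0\<close> by (intro order_tendstoD(2)) auto
  then obtain M where M: "\<And>n. n \<ge> M \<Longrightarrow> dist w (y n)^2 - d^2 < e^2 / 4"
    unfolding eventually_sequentially by blast
  have mid: "d^2 \<le> norm (w - midpoint (y m) (y n))^2" for m n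
  proof -
    have "midpoint (y m) (y n) \<in> K"
      using convexD[OF \<open>convex K\<close> yK yK, of "1/2" "1/2"] by (simp add: midpoint_def scaleR_right_distrib)
    then have "d \<le> norm (w - midpoint (y m) (y n))"
      unfolding d_def using infdist_le dist_norm by metis
    then show ?thesis
      using infdist_nonneg d_def power_mono by blast
  qed
  show "\<exists>M. \<forall>m\<ge>M. \<forall>n\<ge>M. dist (y m) (y n) < e"
  proof (intro exI allI impI)
    fix m n
    assume "M \<le> m" "M \<le> n"
    then have "norm (y m - y n)^2 < e^2"
      using parallelogram_midpoint[of "y m" "y n" w] mid[of m n] M[of m] M[of n]
      by (simp add: dist_norm)
    then show "dist (y m) (y n) < e"
      using \<open>e > 0\<close> by (simp add: dist_norm power_less_imp_less_base)
  qed
qed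

text \<open>The library's \<open>closest_point\<close> needs \<open>heine_borel\<close>; in a complete inner product space a
minimising sequence is Cauchy by the parallelogram law instead.\<close>

lemma closest_point_exists_complete:
  fixes K :: "'a::{real_inner,complete_space} set"
  assumes "closed K" "convex K" "K \<noteq> {}"
  obtains x where "x \<in> K" "\<And>y. y \<in> K \<Longrightarrow> dist w x \<le> dist w y"
proof -
  have "\<exists>y\<in>K. dist w y < infdist w K + inverse (Suc n)" for n
  proof -
    have "(INF y\<in>K. dist w y) < infdist w K + inverse (Suc n)"
      unfolding infdist_notempty[OF \<open>K \<noteq> {}\<close>] by simp
    then show ?thesis
      using \<open>K \<noteq> {}\<close> by (subst (asm) cINF_less_iff) (auto intro: bdd_belowI[of _ 0])
  qed
  then obtain y where yK: "\<And>n. y n \<in> K" and y: "\<And>n. dist w (y n) < infdist w K + inverse (Suc n)"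
    by metis
  have lim: "(\<lambda>n. dist w (y n)) \<longlonglongrightarrow> infdist w K"
  proof (rule tendsto_sandwich[where f = "\<lambda>_. infdist w K" and h = "\<lambda>n. infdist w K + inverse (Suc n)"])
    show "(\<lambda>n. infdist w K + inverse (Suc n)) \<longlonglongrightarrow> infdist w K"
      using tendsto_add[OF tendsto_const LIMSEQ_inverse_real_of_nat] by simp
    show "\<forall>\<^sub>F n in sequentially. infdist w K \<le> dist w (y n)"
      using yK infdist_le by (intro always_eventually) blast
    show "\<forall>\<^sub>F n in sequentially. dist w (y n) \<le> infdist w K + inverse (Suc n)"
      using y less_imp_le by (intro always_eventually) blast
  qed simp
  obtain x where x: "y \<longlonglongrightarrow> x"
    using minimizing_sequence_Cauchy[OF \<open>convex K\<close> yK lim] Cauchy_convergent_iff convergent_def by blast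
  have "x \<in> K"
    using closed_sequentially[OF \<open>closed K\<close>] yK x by blast
  moreover have "dist w x = infdist w K"
    using LIMSEQ_unique[OF tendsto_dist[OF tendsto_const x] lim] .
  ultimately show ?thesis
    using that infdist_le by metis
qed

lemma metric_proj_eqI:
  fixes K :: "'a::real_inner set"
  assumes "convex K" "closed K" "x \<in> K" and obtuse: "\<And>y. y \<in> K \<Longrightarrow> inner (w - x) (y - x) \<le> 0"
  shows "metric_proj K w = x"
proof -
  have closest: "dist w x \<le> dist w y" if "y \<in> K" for y
  proof -
    have "norm (w - y)^2 = norm (w - x)^2 - 2 * inner (w - x) (y - x) + norm (y - x)^2"
      unfolding power2_norm_eq_inner by (simp add: inner_diff_left inner_diff_right inner_commute)
    then have "norm (w - x)^2 \<le> norm (w - y)^2"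
      using obtuse[OF that] zero_le_power2[of "norm (y - x)"] by linarith
    then show ?thesis
      unfolding dist_norm using power2_le_imp_le norm_ge_zero by blast
  qed
  show ?thesis
    unfolding metric_proj_def
    using any_closest_point_unique[OF assms(1,2)] \<open>x \<in> K\<close> closest by (intro the_equality) auto
qed

lemma
  fixes K :: "'a::{real_inner,complete_space} set"
  assumes "closed K" "convex K" "K \<noteq> {}"
  shows metric_proj_in: "metric_proj K w \<in> K"
    and metric_proj_obtuse: "y \<in> K \<Longrightarrow> inner (w - metric_proj K w) (y - metric_proj K w) \<le> 0"
proof -
  obtain x where "x \<in> K" and closest: "\<And>y. y \<in> K \<Longrightarrow> dist w x \<le> dist w y"
    using closest_point_exists_complete[OF assms] by blast
  moreover have "metric_proj K w = x"
    using any_closest_point_dot[OF assms(2,1) \<open>x \<in> K\<close>] closest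
    by (intro metric_proj_eqI[OF assms(2,1) \<open>x \<in> K\<close>]) auto
  ultimately show "metric_proj K w \<in> K" "y \<in> K \<Longrightarrow> inner (w - metric_proj K w) (y - metric_proj K w) \<le> 0"
    using any_closest_point_dot[OF assms(2,1)] by auto
qed

lemma pos_coneI: "(\<And>n. 0 \<le> c n) \<Longrightarrow> (\<lambda>n. c n *\<^sub>R v n) sums x \<Longrightarrow> x \<in> pos_cone v"
  unfolding pos_cone_def by (intro CollectI exI[of _ c] conjI allI)

lemma pos_coneE:
  assumes "x \<in> pos_cone v"
  obtains c where "\<And>n. 0 \<le> c n" "(\<lambda>n. c n *\<^sub>R v n) sums x"
  using assms unfolding pos_cone_def by auto

lemma zero_in_pos_cone: "0 \<in> pos_cone v"
  by (rule pos_coneI[of "\<lambda>_. 0"]) simp_all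

lemma convex_pos_cone: "convex (pos_cone v)"
proof (rule convexI)
  fix x y :: 'a and s t :: real
  assume "x \<in> pos_cone v" "y \<in> pos_cone v" "0 \<le> s" "0 \<le> t"
  then obtain a b where a: "\<And>n. 0 \<le> a n" "(\<lambda>n. a n *\<^sub>R v n) sums x"
    and b: "\<And>n. 0 \<le> b n" "(\<lambda>n. b n *\<^sub>R v n) sums y"
    by (metis pos_coneE)
  have "(\<lambda>n. s *\<^sub>R (a n *\<^sub>R v n) + t *\<^sub>R (b n *\<^sub>R v n)) sums (s *\<^sub>R x + t *\<^sub>R y)"
    by (intro sums_add sums_scaleR_right a b)
  then have "(\<lambda>n. (s * a n + t * b n) *\<^sub>R v n) sums (s *\<^sub>R x + t *\<^sub>R y)"
    by (simp add: scaleR_add_left)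
  then show "s *\<^sub>R x + t *\<^sub>R y \<in> pos_cone v"
    using a b \<open>0 \<le> s\<close> \<open>0 \<le> t\<close> by (intro pos_coneI) simp_all
qed

lemma pos_cone_add_generator:
  assumes "\<And>k. 0 \<le> c k" "(\<lambda>k. c k *\<^sub>R v k) sums x" "0 \<le> c n + t"
  shows "x + t *\<^sub>R v n \<in> pos_cone v"
proof (rule pos_coneI)
  have "(\<lambda>k. c k *\<^sub>R v k + (if k = n then t *\<^sub>R v k else 0)) sums (x + t *\<^sub>R v n)"
    by (intro sums_add assms(2) sums_single)
  then show "(\<lambda>k. (c k + (if k = n then t else 0)) *\<^sub>R v k) sums (x + t *\<^sub>R v n)"
    by (rule sums_cong[THEN iffD1, rotated]) (simp add: scaleR_add_left)
  show "0 \<le> c k + (if k = n then t else 0)" for k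
    using assms(1,3) by simp
qed

lemma pos_cone_obtuse_iff:
  fixes v :: "nat \<Rightarrow> 'a::real_inner"
  assumes c: "\<And>k. 0 \<le> c k" and x: "(\<lambda>k. c k *\<^sub>R v k) sums x"
  shows "(\<forall>y\<in>pos_cone v. inner (w - x) (y - x) \<le> 0) \<longleftrightarrow>
    (\<forall>n. inner w (v n) \<le> inner x (v n)) \<and> (\<forall>n. 0 < c n \<longrightarrow> inner x (v n) = inner w (v n))"
    (is "?obtuse \<longleftrightarrow> ?dual_feasible \<and> ?complementary")
proof
  assume ?obtuse
  have "inner (w - x) (v n) \<le> 0" for n
  proof -
    have "x + 1 *\<^sub>R v n \<in> pos_cone v"
      using c[of n] by (intro pos_cone_add_generator[OF c x]) simp
    then show ?thesis
      using \<open>?obtuse\<close> by fastforce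
  qed
  moreover have "0 \<le> c n * inner (w - x) (v n)" for n
  proof -
    have "x + (- c n) *\<^sub>R v n \<in> pos_cone v"
      by (intro pos_cone_add_generator[OF c x]) simp
    then show ?thesis
      using \<open>?obtuse\<close> by fastforce
  qed
  ultimately show "?dual_feasible \<and> ?complementary"
    by (auto simp: inner_diff_left zero_le_mult_iff) (meson antisym not_le)
next
  assume "?dual_feasible \<and> ?complementary"
  then have le: "inner (w - x) (v n) \<le> 0" and eq: "0 < c n \<Longrightarrow> inner (w - x) (v n) = 0" for n
    by (auto simp: inner_diff_left)
  have "(\<lambda>n. c n * inner (w - x) (v n)) sums inner (w - x) x"
    using bounded_linear.sums[OF bounded_linear_inner_right x, of "w - x"] by simp
  moreover have "c n * inner (w - x) (v n) = 0" for n
    using c[of n] eq[of n] by (cases "c n = 0") auto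
  ultimately have "inner (w - x) x = 0"
    by (simp add: sums_iff)
  moreover have "inner (w - x) y \<le> 0" if "y \<in> pos_cone v" for y
  proof -
    obtain d where d: "\<forall>n. 0 \<le> d n" "(\<lambda>n. d n *\<^sub>R v n) sums y"
      using \<open>y \<in> pos_cone v\<close> unfolding pos_cone_def by blast
    have nonpos: "d n * inner (w - x) (v n) \<le> 0" for n
      using d(1) le by (simp add: mult_nonneg_nonpos)
    have "(\<lambda>n. d n * inner (w - x) (v n)) sums inner (w - x) y"
      using bounded_linear.sums[OF bounded_linear_inner_right d(2), of "w - x"] by simp
    from sums_le[OF nonpos this sums_zero] show ?thesis .
  qed
  ultimately show ?obtuse
    by (simp add: inner_diff_right)
qed

lemma sums_restrict_iff:
  fixes f :: "nat \<Rightarrow> 'a::real_normed_vector"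
  shows "(\<lambda>k. if k \<in> S then f k else 0) sums x \<longleftrightarrow> sconv S f \<and> ssum S f = x"
proof -
  have partial_sums: "(\<lambda>N. \<Sum>k<Suc N. if k \<in> S then f k else 0) = (\<lambda>N. \<Sum>n\<in>S \<inter> {..N}. f n)"
    unfolding lessThan_Suc_atMost by (rule ext, subst Int_commute, rule sum.inter_restrict[symmetric]) simp
  have "(\<lambda>k. if k \<in> S then f k else 0) sums x \<longleftrightarrow> (\<lambda>N. \<Sum>n\<in>S \<inter> {..N}. f n) \<longlonglongrightarrow> x"
    unfolding sums_def partial_sums[symmetric] by (rule filterlim_sequentially_Suc[symmetric])
  also have "\<dots> \<longleftrightarrow> sconv S f \<and> ssum S f = x"
    unfolding sconv_def ssum_def by (metis convergent_LIMSEQ_iff convergent_def limI)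
  finally show ?thesis .
qed

lemma sums_ssum_iff:
  "(\<lambda>n. (if n \<in> S then a n else 0) *\<^sub>R v n) sums x \<longleftrightarrow>
    sconv S (\<lambda>n. a n *\<^sub>R v n) \<and> ssum S (\<lambda>n. a n *\<^sub>R v n) = x"
proof -
  have "(\<lambda>n. (if n \<in> S then a n else 0) *\<^sub>R v n) = (\<lambda>n. if n \<in> S then a n *\<^sub>R v n else 0)"
    by auto
  then show ?thesis
    by (simp only: sums_restrict_iff)
qed

lemma ssum_inner_left:
  fixes v :: "nat \<Rightarrow> 'a::real_inner"
  assumes "sconv S (\<lambda>k. a k *\<^sub>R v k)"
  shows "ssum S (\<lambda>k. a k * inner (v k) y) = inner (ssum S (\<lambda>k. a k *\<^sub>R v k)) y"
proof -
  have "(\<lambda>k. (if k \<in> S then a k else 0) *\<^sub>R v k) sums ssum S (\<lambda>k. a k *\<^sub>R v k)"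
    using assms sums_ssum_iff by blast
  from bounded_linear.sums[OF bounded_linear_inner_left this, of y]
  have "(\<lambda>k. if k \<in> S then a k * inner (v k) y else 0) sums inner (ssum S (\<lambda>k. a k *\<^sub>R v k)) y"
    by (rule sums_cong[THEN iffD1, rotated]) simp
  then show ?thesis
    using sums_restrict_iff by blast
qed

lemma pos_cone_ssum_rep:
  assumes "x \<in> pos_cone v"
  obtains S a where "sconv S (\<lambda>n. a n *\<^sub>R v n)" "\<forall>n\<in>S. 0 < a n" "x = ssum S (\<lambda>n. a n *\<^sub>R v n)"
proof -
  obtain c where c: "\<And>n. 0 \<le> c n" "(\<lambda>n. c n *\<^sub>R v n) sums x"
    using assms by (metis pos_coneE)
  have "(\<lambda>n. (if n \<in> {n. 0 < c n} then c n else 0) *\<^sub>R v n) = (\<lambda>n. c n *\<^sub>R v n)"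
    using c(1) by (auto simp: fun_eq_iff order.strict_iff_order)
  then have "sconv {n. 0 < c n} (\<lambda>n. c n *\<^sub>R v n) \<and> ssum {n. 0 < c n} (\<lambda>n. c n *\<^sub>R v n) = x"
    using c(2) sums_ssum_iff by metis
  then show ?thesis
    by (intro that[of "{n. 0 < c n}" c]) auto
qed

lemma ssum_rep_unique:
  assumes npr: "no_positive_relations v"
    and a: "sconv S (\<lambda>n. a n *\<^sub>R v n)" "\<forall>n\<in>S. 0 < a n"
    and b: "sconv T (\<lambda>n. b n *\<^sub>R v n)" "\<forall>n\<in>T. 0 < b n"
    and eq: "ssum S (\<lambda>n. a n *\<^sub>R v n) = ssum T (\<lambda>n. b n *\<^sub>R v n)"
  shows "S = T \<and> (\<forall>n\<in>S. a n = b n)"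
proof -
  define a' where "a' = (\<lambda>n. if n \<in> S then a n else 0)"
  define b' where "b' = (\<lambda>n. if n \<in> T then b n else 0)"
  have "(\<lambda>n. a' n *\<^sub>R v n) sums ssum S (\<lambda>n. a n *\<^sub>R v n)"
    and "(\<lambda>n. b' n *\<^sub>R v n) sums ssum S (\<lambda>n. a n *\<^sub>R v n)"
    using a(1) b(1) eq unfolding a'_def b'_def sums_ssum_iff by simp_all
  moreover have "\<forall>n. 0 \<le> a' n" "\<forall>n. 0 \<le> b' n"
    using a(2) b(2) unfolding a'_def b'_def by (auto simp: less_imp_le)
  ultimately have "a' = b'"
    using npr unfolding no_positive_relations_def by blast
  moreover have "S = {n. 0 < a' n}" "T = {n. 0 < b' n}"
    using a(2) b(2) unfolding a'_def b'_def by auto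
  ultimately show ?thesis
    unfolding a'_def b'_def by (metis (full_types))
qed

lemma metric_proj_pos_cone_iff:
  fixes v :: "nat \<Rightarrow> 'a::{real_inner,complete_space}"
  assumes closed: "closed (pos_cone v)" and a: "sconv S (\<lambda>n. a n *\<^sub>R v n)" "\<forall>n\<in>S. 0 < a n"
  shows "metric_proj (pos_cone v) w = ssum S (\<lambda>n. a n *\<^sub>R v n) \<longleftrightarrow>
    (\<forall>n. inner w (v n) \<le> ssum S (\<lambda>k. a k * inner (v k) (v n))) \<and>
    (\<forall>n\<in>S. ssum S (\<lambda>k. a k * inner (v k) (v n)) = inner w (v n))"
proof -
  define x where "x = ssum S (\<lambda>n. a n *\<^sub>R v n)"
  define c where "c = (\<lambda>n. if n \<in> S then a n else 0)"
  have c: "\<And>n. 0 \<le> c n"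
    using a(2) unfolding c_def by (auto simp: less_imp_le)
  have c_sums: "(\<lambda>n. c n *\<^sub>R v n) sums x"
    using a(1) sums_ssum_iff unfolding c_def x_def by blast
  have support: "0 < c n \<longleftrightarrow> n \<in> S" for n
    using a(2) unfolding c_def by auto
  have "pos_cone v \<noteq> {}"
    using zero_in_pos_cone by blast
  then have "metric_proj (pos_cone v) w = x \<longleftrightarrow> (\<forall>y\<in>pos_cone v. inner (w - x) (y - x) \<le> 0)"
    using metric_proj_obtuse[OF closed convex_pos_cone]
      metric_proj_eqI[OF convex_pos_cone closed pos_coneI[OF c c_sums]] by blast
  also have "\<dots> \<longleftrightarrow> (\<forall>n. inner w (v n) \<le> inner x (v n)) \<and> (\<forall>n\<in>S. inner x (v n) = inner w (v n))"
    unfolding pos_cone_obtuse_iff[OF c c_sums] support by blast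
  also have "\<dots> \<longleftrightarrow> (\<forall>n. inner w (v n) \<le> ssum S (\<lambda>k. a k * inner (v k) (v n))) \<and>
      (\<forall>n\<in>S. ssum S (\<lambda>k. a k * inner (v k) (v n)) = inner w (v n))"
    unfolding x_def ssum_inner_left[OF a(1)] ..
  finally show ?thesis
    unfolding x_def .
qed

theorem proposition1p3:
  fixes v :: "nat \<Rightarrow> 'a::{real_inner, complete_space}"
  assumes npr: "no_positive_relations v"
    and cl: "closed (pos_cone v)"
  shows "\<forall>w::'a.
    (\<exists>S a. sconv S (\<lambda>n. a n *\<^sub>R v n) \<and> (\<forall>n\<in>S. a n > 0)
        \<and> (\<forall>n. ssum S (\<lambda>k. a k * inner (v k) (v n)) \<ge> inner w (v n))
        \<and> (\<forall>n\<in>S. ssum S (\<lambda>k. a k * inner (v k) (v n)) = inner w (v n))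
        \<and> metric_proj (pos_cone v) w = ssum S (\<lambda>n. a n *\<^sub>R v n))
    \<and> (\<forall>S a S' a'.
        sconv S (\<lambda>n. a n *\<^sub>R v n) \<and> (\<forall>n\<in>S. a n > 0)
          \<and> metric_proj (pos_cone v) w = ssum S (\<lambda>n. a n *\<^sub>R v n)
        \<and> sconv S' (\<lambda>n. a' n *\<^sub>R v n) \<and> (\<forall>n\<in>S'. a' n > 0)
          \<and> metric_proj (pos_cone v) w = ssum S' (\<lambda>n. a' n *\<^sub>R v n)
        \<longrightarrow> S = S' \<and> (\<forall>n\<in>S. a n = a' n))
    \<and> (\<forall>S a S' a'.
        sconv S (\<lambda>n. a n *\<^sub>R v n) \<and> (\<forall>n\<in>S. a n > 0)
          \<and> (\<forall>n. ssum S (\<lambda>k. a k * inner (v k) (v n)) \<ge> inner w (v n))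
          \<and> (\<forall>n\<in>S. ssum S (\<lambda>k. a k * inner (v k) (v n)) = inner w (v n))
        \<and> sconv S' (\<lambda>n. a' n *\<^sub>R v n) \<and> (\<forall>n\<in>S'. a' n > 0)
          \<and> (\<forall>n. ssum S' (\<lambda>k. a' k * inner (v k) (v n)) \<ge> inner w (v n))
          \<and> (\<forall>n\<in>S'. ssum S' (\<lambda>k. a' k * inner (v k) (v n)) = inner w (v n))
        \<longrightarrow> S = S' \<and> (\<forall>n\<in>S. a n = a' n))"
proof (intro allI conjI, goal_cases)
  case (1 w)
  have "metric_proj (pos_cone v) w \<in> pos_cone v"
    using metric_proj_in[OF cl convex_pos_cone] zero_in_pos_cone by blast
  then obtain S a where rep: "sconv S (\<lambda>n. a n *\<^sub>R v n)" "\<forall>n\<in>S. 0 < a n"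
    "metric_proj (pos_cone v) w = ssum S (\<lambda>n. a n *\<^sub>R v n)"
    by (elim pos_cone_ssum_rep)
  moreover note metric_proj_pos_cone_iff[OF cl rep(1,2), THEN iffD1, OF rep(3)]
  ultimately show ?case
    by blast
next
  case 2
  show ?case
    by (intro impI, elim conjE, rule ssum_rep_unique[OF npr]) (assumption | simp)+
next
  case (3 w S a S' a')
  show ?case
  proof (intro impI, elim conjE, goal_cases)
    case 1
    have "metric_proj (pos_cone v) w = ssum S (\<lambda>n. a n *\<^sub>R v n)"
      using metric_proj_pos_cone_iff[OF cl 1(1,2)] 1(3,4) by blast
    moreover have "metric_proj (pos_cone v) w = ssum S' (\<lambda>n. a' n *\<^sub>R v n)"
      using metric_proj_pos_cone_iff[OF cl 1(5,6)] 1(7,8) by blast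
    ultimately show ?case
      by (intro ssum_rep_unique[OF npr 1(1,2,5,6)]) simp
  qed
qed

end
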